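(* For every $\epsilon$ with $0<\epsilon<10^{-12}$ there exists $k_0=k_0(\epsilon)$ such that for every $k\ge k_0$ the following holds: if $K>(1-\epsilon)k$ and $G$ is a two-multicoloured (red/blue) $\tfrac{27}{8}\epsilon^4k$-almost-complete graph on $K$ vertices, then $G$ contains a red connected-matching on at least $(\tfrac23-7\epsilon^{1/8})k$ vertices or a blue connected-matching on at least $(\tfrac23-7\epsilon^{1/8})k$ vertices.
   Context: A two-multicolouring assigns each edge a nonempty subset of {red, blue}; $G_{\mathrm{red}}$ ($G_{\mathrm{blue}}$) is the spanning subgraph of edges whose set contains red (blue). A graph on $N$ vertices is $a$-almost-complete if its minimum degree is at least $(N-1)-a$. A matching is a set of pairwise vertex-disjoint edges; its number of vertices is twice its number of edges. A red (blue) connected-matching is a matching in $G_{\mathrm{red}}$ ($G_{\mathrm{blue}}$) all of whose edges lie in one connected component of $G_{\mathrm{red}}$ ($G_{\mathrm{blue}}$). *)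

theory Defs
  imports Complex_Main
begin

definition edges_on :: "nat set \<Rightarrow> nat set set \<Rightarrow> bool" where
  "edges_on V E \<longleftrightarrow> E \<subseteq> {{u, v} | u v. u \<in> V \<and> v \<in> V \<and> u \<noteq> v}"

text \<open>A two-multicoloured graph: each edge of G = R \<union> B carries a nonempty subset of
{red, blue}; R = G_red (edges whose set contains red), B = G_blue.\<close>
definition two_multicoloured_graph :: "nat set \<Rightarrow> nat set set \<Rightarrow> nat set set \<Rightarrow> bool" where
  "two_multicoloured_graph V R B \<longleftrightarrow> finite V \<and> edges_on V R \<and> edges_on V B"

definition degree :: "nat set set \<Rightarrow> nat \<Rightarrow> nat" where
  "degree E v = card {u. {u, v} \<in> E}"

definition almost_complete :: "nat set \<Rightarrow> nat set set \<Rightarrow> real \<Rightarrow> bool" where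
  "almost_complete V E a \<longleftrightarrow> (\<forall>v\<in>V. real (degree E v) \<ge> (real (card V) - 1) - a)"

definition matching :: "nat set set \<Rightarrow> bool" where
  "matching M \<longleftrightarrow> (\<forall>e\<in>M. \<forall>e'\<in>M. e \<noteq> e' \<longrightarrow> e \<inter> e' = {})"

definition adj :: "nat set set \<Rightarrow> (nat \<times> nat) set" where
  "adj E = {(u, v). {u, v} \<in> E \<and> u \<noteq> v}"

definition connected_matching :: "nat set \<Rightarrow> nat set set \<Rightarrow> nat set set \<Rightarrow> bool" where
  "connected_matching V E M \<longleftrightarrow> M \<subseteq> E \<and> matching M \<and>
     (\<exists>w\<in>V. \<forall>e\<in>M. \<forall>x\<in>e. (w, x) \<in> (adj E)\<^sup>*)"

end

theory Submission
  imports Defs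
begin

(* Every vertex misses at most a = 27/8 \<epsilon>^4 k others. If some red component W misses at most 2a
   vertices, W is red-connected; otherwise every red component misses more than 2a vertices, any
   two vertices then have a common blue neighbour across a red cut, and W = V is blue-connected.
   So W is connected in one colour E1 and almost complete in E1 \<union> E2. A maximum E1-matching M in
   W either covers 2/3 |W| vertices, or its uncovered set U is E1-independent, hence almost
   complete in E2. As M has no augmenting path of length three, every edge of M has an endpoint
   with at most one E1-neighbour in U; these |M| endpoints are almost completely E2-joined to U.
   A maximum E2-matching between them and U, extended by a maximum E2-matching of what is left
   of U, is an E2-connected matching covering at least 2/3 |W| - O(a) vertices. *)

section \<open>Edges and matchings\<close>

lemma edges_onE:
  assumes "edges_on V E" "e \<in> E"
  obtains u v where "e = {u, v}" "u \<in> V" "v \<in> V" "u \<noteq> v"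
  using assms unfolding edges_on_def by blast

lemma card_edge: "edges_on V E \<Longrightarrow> e \<in> E \<Longrightarrow> card e = 2"
  by (erule edges_onE) auto

lemma edges_on_Un: "edges_on V E \<Longrightarrow> edges_on V E' \<Longrightarrow> edges_on V (E \<union> E')"
  unfolding edges_on_def by blast

lemma matching_subset: "matching M \<Longrightarrow> M' \<subseteq> M \<Longrightarrow> matching M'"
  unfolding matching_def by blast

lemma matchingD: "matching M \<Longrightarrow> e \<in> M \<Longrightarrow> e' \<in> M \<Longrightarrow> e \<noteq> e' \<Longrightarrow> e \<inter> e' = {}"
  unfolding matching_def by blast

lemma matching_insert: "matching M \<Longrightarrow> f \<inter> \<Union>M = {} \<Longrightarrow> matching (insert f M)"
  unfolding matching_def by blast

lemma matching_Un:
  "matching M \<Longrightarrow> matching N \<Longrightarrow> \<Union>M \<inter> \<Union>N = {} \<Longrightarrow> matching (M \<union> N)"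
  unfolding matching_def by blast

lemma card_insert_free_edge:
  assumes "finite M" "f \<noteq> {}" "f \<inter> \<Union>M = {}"
  shows "card (insert f M) = Suc (card M)"
proof -
  have "f \<notin> M" using assms(2,3) by blast
  then show ?thesis using assms(1) by simp
qed

lemma card_Union_matching_inter:
  assumes "finite M" "matching M" "\<forall>e\<in>M. finite e" "\<forall>e\<in>M. card (e \<inter> S) = c"
  shows "card (\<Union>M \<inter> S) = c * card M"
proof -
  have "\<Union>M \<inter> S = (\<Union>e\<in>M. e \<inter> S)" by blast
  also have "card \<dots> = (\<Sum>e\<in>M. card (e \<inter> S))"
    using assms(1-3) by (intro card_UN_disjoint) (auto simp: matching_def)
  also have "\<dots> = c * card M" using assms(4) by simp
  finally show ?thesis .
qed

lemma card_Union_matching: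
  assumes "finite M" "matching M" "\<forall>e\<in>M. card e = 2"
  shows "card (\<Union>M) = 2 * card M"
  using card_Union_matching_inter[OF assms(1,2), of UNIV 2] assms(3)
  by (metis card.infinite inf_top_right zero_neq_numeral)

lemma real_card_Diff: "finite A \<Longrightarrow> real (card (A - B)) = real (card A) - real (card (A \<inter> B))"
  by (simp add: card_Diff_subset_Int card_mono of_nat_diff)

definition maximum_matching :: "nat set set \<Rightarrow> nat set set \<Rightarrow> bool" where
  "maximum_matching F M \<longleftrightarrow>
     M \<subseteq> F \<and> matching M \<and> (\<forall>M'. M' \<subseteq> F \<longrightarrow> matching M' \<longrightarrow> card M' \<le> card M)"

lemma maximum_matchingD:
  "maximum_matching F M \<Longrightarrow> M' \<subseteq> F \<Longrightarrow> matching M' \<Longrightarrow> card M' \<le> card M"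
  unfolding maximum_matching_def by blast

lemma maximum_matching_exists:
  assumes "finite F"
  shows "\<exists>M. maximum_matching F M"
proof -
  have "\<exists>M. (M \<subseteq> F \<and> matching M) \<and> (\<forall>M'. M' \<subseteq> F \<and> matching M' \<longrightarrow> card M' \<le> card M)"
    by (rule ex_has_greatest_nat[where k = "{}" and b = "Suc (card F)"])
       (use assms in \<open>auto simp: matching_def le_imp_less_Suc card_mono\<close>)
  then show ?thesis unfolding maximum_matching_def by blast
qed

lemma maximum_matching_no_free_edge:
  assumes "finite F" "maximum_matching F M" "f \<in> F" "f \<noteq> {}" "f \<inter> \<Union>M = {}"
  shows False
proof -
  have "finite M" using assms(1,2) finite_subset unfolding maximum_matching_def by blast
  then have "card (insert f M) = Suc (card M)" using assms(4,5) by (rule card_insert_free_edge)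
  moreover have "insert f M \<subseteq> F" "matching (insert f M)"
    using assms(2,3,5) matching_insert unfolding maximum_matching_def by auto
  then have "card (insert f M) \<le> card M" by (rule maximum_matchingD[OF assms(2)])
  ultimately show False by simp
qed

lemma maximum_matching_no_augmenting_path:
  assumes "finite F" "maximum_matching F M" "{x, y} \<in> M" "x \<noteq> y"
    and "{x, u} \<in> F" "{y, v} \<in> F" "u \<noteq> v" "u \<notin> \<Union>M" "v \<notin> \<Union>M"
  shows False
proof -
  have M: "M \<subseteq> F" "matching M"
    using assms(2) unfolding maximum_matching_def by blast+
  have "finite M" using M(1) assms(1) by (rule finite_subset)
  define M0 where "M0 = M - {{x, y}}"
  have "finite M0" "matching M0"
    unfolding M0_def using \<open>finite M\<close> matching_subset[OF M(2)] by auto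
  have "e \<inter> {x, y} = {}" if "e \<in> M0" for e
    using matchingD[OF M(2) _ assms(3)] that unfolding M0_def by blast
  then have free: "x \<notin> \<Union>M0" "y \<notin> \<Union>M0" "u \<notin> \<Union>M0" "v \<notin> \<Union>M0"
    using assms(8,9) unfolding M0_def by blast+
  have yv: "{y, v} \<inter> \<Union>M0 = {}" using free by blast
  have "x \<noteq> v" "y \<noteq> u" using assms(3,8,9) by blast+
  then have xu: "{x, u} \<inter> \<Union>(insert {y, v} M0) = {}"
    using free assms(4,7) by auto
  define M' where "M' = insert {x, u} (insert {y, v} M0)"
  have "M' \<subseteq> F" using M(1) assms(5,6) unfolding M'_def M0_def by blast
  moreover have "matching M'"
    unfolding M'_def using \<open>matching M0\<close> yv xu by (intro matching_insert)
  ultimately have "card M' \<le> card M" by (rule maximum_matchingD[OF assms(2)])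
  moreover have "card M' = Suc (Suc (card M0))"
    unfolding M'_def using \<open>finite M0\<close> yv xu
    by (simp add: card_insert_free_edge del: card_insert_disjoint)
  moreover have "Suc (card M0) = card M"
    unfolding M0_def by (rule card_Suc_Diff1[OF \<open>finite M\<close> assms(3)])
  ultimately show False by simp
qed

section \<open>Neighbourhoods and connectivity\<close>

lemma sym_adj: "sym (adj E)"
  unfolding adj_def sym_def by (auto simp: insert_commute)

lemma adj_rtrancl_sym: "(x, y) \<in> (adj E)\<^sup>* \<Longrightarrow> (y, x) \<in> (adj E)\<^sup>*"
  using sym_rtrancl[OF sym_adj] by (rule symD)

definition neighbours :: "nat set set \<Rightarrow> nat set \<Rightarrow> nat \<Rightarrow> nat set" where
  "neighbours E S x = {y \<in> S. y \<noteq> x \<and> {x, y} \<in> E}"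

definition non_neighbours :: "nat set set \<Rightarrow> nat set \<Rightarrow> nat \<Rightarrow> nat set" where
  "non_neighbours E S x = {y \<in> S. y \<noteq> x \<and> {x, y} \<notin> E}"

lemma neighbours_adj: "y \<in> neighbours E S x \<Longrightarrow> (x, y) \<in> adj E"
  unfolding neighbours_def adj_def by auto

lemma card_neighbours_add_non_neighbours:
  "finite S \<Longrightarrow> card (neighbours E S x) + card (non_neighbours E S x) = card (S - {x})"
  unfolding neighbours_def non_neighbours_def
  by (subst card_Un_disjoint[symmetric]) (auto intro: arg_cong[where f = card])

lemma card_non_neighbours_mono:
  "finite T \<Longrightarrow> S \<subseteq> T \<Longrightarrow> E' \<subseteq> E \<Longrightarrow> card (non_neighbours E S x) \<le> card (non_neighbours E' T x)"
  unfolding non_neighbours_def by (rule card_mono) auto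

lemma degree_eq_card_neighbours:
  assumes "edges_on V E"
  shows "degree E x = card (neighbours E V x)"
proof -
  have "u \<in> V \<and> u \<noteq> x" if "{u, x} \<in> E" for u
    using assms that by (auto elim!: edges_onE simp: doubleton_eq_iff)
  then have "{u. {u, x} \<in> E} = neighbours E V x"
    unfolding neighbours_def by (auto simp: insert_commute)
  then show ?thesis unfolding degree_def by simp
qed

lemma card_non_neighbours_le_if_almost_complete:
  assumes "finite V" "edges_on V E" "almost_complete V E a" "x \<in> V"
  shows "real (card (non_neighbours E V x)) \<le> a"
proof -
  have "real (card (neighbours E V x)) \<ge> real (card V) - 1 - a"
    using assms(3,4) degree_eq_card_neighbours[OF assms(2)] unfolding almost_complete_def by metis
  moreover have "card (neighbours E V x) + card (non_neighbours E V x) = card V - 1"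
    using card_neighbours_add_non_neighbours[OF assms(1)] assms(1,4) by simp
  moreover have "card V \<ge> 1" using assms(1,4) by (metis One_nat_def Suc_leI card_gt_0_iff empty_iff)
  ultimately show ?thesis by linarith
qed

lemma Int_nonempty_if_card_add_gt:
  assumes "finite S" "A \<subseteq> S" "B \<subseteq> S" "real (card S) < real (card A) + real (card B)"
  shows "A \<inter> B \<noteq> {}"
proof
  assume "A \<inter> B = {}"
  then have "card (A \<union> B) = card A + card B"
    using assms(1-3) by (intro card_Un_disjoint) (auto intro: finite_subset)
  moreover have "card (A \<union> B) \<le> card S" using assms(1-3) by (intro card_mono) auto
  ultimately show False using assms(4) by linarith
qed

lemma card_neighbours_ge:
  assumes "finite S" "real (card (non_neighbours E S x)) \<le> a"
  shows "real (card (neighbours E S x)) \<ge> real (card S) - 1 - a"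
proof -
  have "card (S - {x}) \<ge> card S - 1" by (simp add: card_Diff_singleton_if)
  then show ?thesis
    using card_neighbours_add_non_neighbours[OF assms(1), of E x] assms(2) by linarith
qed

lemma common_neighbour_connected:
  assumes "z \<in> neighbours E S x" "z \<in> neighbours E T y"
  shows "(x, y) \<in> (adj E)\<^sup>*"
proof -
  have "(x, z) \<in> adj E" "(z, y) \<in> adj E"
    using assms neighbours_adj symD[OF sym_adj] by blast+
  then show ?thesis by simp
qed

lemma connected_if_dense:
  assumes "finite S" "\<forall>v\<in>S. real (card (non_neighbours E S v)) \<le> a"
    and "real (card S) > 2 * a + 2" "x \<in> S" "y \<in> S"
  shows "(x, y) \<in> (adj E)\<^sup>*"
proof -
  have "real (card S) < real (card (neighbours E S x)) + real (card (neighbours E S y))"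
    using card_neighbours_ge[OF assms(1) assms(2)[rule_format, OF assms(4)]]
      card_neighbours_ge[OF assms(1) assms(2)[rule_format, OF assms(5)]] assms(3) by linarith
  then have "neighbours E S x \<inter> neighbours E S y \<noteq> {}"
    by (intro Int_nonempty_if_card_add_gt[OF assms(1)]) (auto simp: neighbours_def)
  then obtain z where "z \<in> neighbours E S x" "z \<in> neighbours E S y" by blast
  then show ?thesis by (rule common_neighbour_connected)
qed

definition component :: "nat set set \<Rightarrow> nat set \<Rightarrow> nat \<Rightarrow> nat set" where
  "component E V x = {y \<in> V. (x, y) \<in> (adj E)\<^sup>*}"

lemma self_in_component: "x \<in> V \<Longrightarrow> x \<in> component E V x"
  unfolding component_def by simp

lemma no_edge_leaving_component:
  assumes "y \<in> component E V x" "z \<in> V - component E V x"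
  shows "{y, z} \<notin> E"
proof
  assume "{y, z} \<in> E"
  moreover have "y \<noteq> z" using assms by blast
  ultimately have "(y, z) \<in> adj E" unfolding adj_def by simp
  then have "(x, z) \<in> (adj E)\<^sup>*"
    using assms(1) unfolding component_def by (blast intro: rtrancl_into_rtrancl)
  then show False using assms(2) unfolding component_def by blast
qed

lemma card_neighbours_across_component:
  assumes "finite V" "\<forall>v\<in>V. real (card (non_neighbours (R \<union> B) V v)) \<le> a"
    and "v \<in> component R V x"
  shows "real (card (neighbours B (V - component R V x) v)) \<ge> real (card (V - component R V x)) - a"
proof -
  let ?D = "V - component R V x"
  have "v \<in> V" using assms(3) unfolding component_def by blast
  have "non_neighbours B ?D v \<subseteq> non_neighbours (R \<union> B) V v"
    using no_edge_leaving_component[OF assms(3)] unfolding non_neighbours_def by blast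
  then have "card (non_neighbours B ?D v) \<le> card (non_neighbours (R \<union> B) V v)"
    by (rule card_mono[rotated]) (simp add: non_neighbours_def assms(1))
  moreover have "card (neighbours B ?D v) + card (non_neighbours B ?D v) = card ?D"
    using card_neighbours_add_non_neighbours[of ?D B v] assms(1,3) by simp
  ultimately show ?thesis using assms(2) \<open>v \<in> V\<close> by fastforce
qed

lemma connected_within_component:
  assumes "finite V" "\<forall>v\<in>V. real (card (non_neighbours (R \<union> B) V v)) \<le> a"
    and "real (card (V - component R V u)) > 2 * a" "u \<in> V" "v \<in> component R V u"
  shows "(u, v) \<in> (adj B)\<^sup>*"
proof -
  let ?D = "V - component R V u"
  have "real (card ?D) < real (card (neighbours B ?D u)) + real (card (neighbours B ?D v))"
    using card_neighbours_across_component[OF assms(1,2) self_in_component[OF assms(4)]]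
      card_neighbours_across_component[OF assms(1,2,5)] assms(3) by linarith
  then have "neighbours B ?D u \<inter> neighbours B ?D v \<noteq> {}"
    by (intro Int_nonempty_if_card_add_gt) (auto simp: neighbours_def assms(1))
  then obtain z where "z \<in> neighbours B ?D u" "z \<in> neighbours B ?D v" by blast
  then show ?thesis by (rule common_neighbour_connected)
qed

lemma connected_if_adjacent:
  assumes "finite V" "\<forall>v\<in>V. real (card (non_neighbours (R \<union> B) V v)) \<le> a"
    and "\<forall>v\<in>V. real (card (V - component R V v)) > 2 * a"
    and "y \<in> V" "z \<in> V" "z \<noteq> y" "{y, z} \<in> R \<union> B"
  shows "(y, z) \<in> (adj B)\<^sup>*"
proof (cases "{y, z} \<in> R")
  case True
  then have "z \<in> component R V y" using assms(5,6) unfolding component_def adj_def by auto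
  then show ?thesis using connected_within_component[OF assms(1,2)] assms(3,4) by blast
next
  case False
  then have "(y, z) \<in> adj B" using assms(6,7) unfolding adj_def by auto
  then show ?thesis by simp
qed

lemma connected_if_components_small:
  assumes "finite V" "\<forall>v\<in>V. real (card (non_neighbours (R \<union> B) V v)) \<le> a"
    and "\<forall>v\<in>V. real (card (V - component R V v)) > 2 * a" "x \<in> V" "y \<in> V"
  shows "(x, y) \<in> (adj B)\<^sup>*"
proof (cases "y \<in> component R V x")
  case True
  then show ?thesis using connected_within_component[OF assms(1,2)] assms(3,4) by blast
next
  case False
  let ?P = "neighbours B (V - component R V x) x"
  have "a \<ge> 0" using assms(2,4) by (meson of_nat_0_le_iff order_trans)
  then have "real (card ?P) > a"
    using card_neighbours_across_component[OF assms(1,2) self_in_component[OF assms(4)]] assms(3,4)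
    by fastforce
  then have "\<not> ?P \<subseteq> non_neighbours (R \<union> B) V y"
    using card_mono[of "non_neighbours (R \<union> B) V y" ?P] assms(1,2,5)
    by (fastforce simp: non_neighbours_def)
  then obtain z where z: "z \<in> ?P" "z \<notin> non_neighbours (R \<union> B) V y" by blast
  have "(x, z) \<in> adj B" using z(1) by (rule neighbours_adj)
  moreover have "(z, y) \<in> (adj B)\<^sup>*"
  proof (cases "z = y")
    case False
    with z have "z \<in> V" "{y, z} \<in> R \<union> B"
      unfolding neighbours_def non_neighbours_def by auto
    then show ?thesis
      using connected_if_adjacent[OF assms(1-3,5) _ False] adj_rtrancl_sym by blast
  qed simp
  ultimately show ?thesis by simp
qed

section \<open>Connected matchings in almost complete sets\<close>

lemma uncovered_independent:
  assumes "finite W" "maximum_matching {e \<in> E. e \<subseteq> W} M" "u \<in> W - \<Union>M" "v \<in> W - \<Union>M"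
  shows "{u, v} \<notin> E"
proof
  assume "{u, v} \<in> E"
  moreover have "finite {e \<in> E. e \<subseteq> W}" by (rule finite_subset[of _ "Pow W"]) (auto simp: assms(1))
  ultimately show False
    using maximum_matching_no_free_edge[OF _ assms(2), of "{u, v}"] assms(3,4) by blast
qed

lemma card_uncovered_le_if_maximum_matching:
  assumes "finite S" "\<forall>v\<in>S. real (card (non_neighbours E S v)) \<le> a" "0 \<le> a"
    and "maximum_matching {e \<in> E. e \<subseteq> S} M"
  shows "real (card (S - \<Union>M)) \<le> a + 1"
proof (cases "S - \<Union>M = {}")
  case True
  then have "card (S - \<Union>M) = 0" by (simp only: card.empty)
  then show ?thesis using assms(3) by simp
next
  case False
  then obtain u where u: "u \<in> S - \<Union>M" by blast
  have "(S - \<Union>M) - {u} \<subseteq> non_neighbours E S u"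
    using uncovered_independent[OF assms(1,4) u] unfolding non_neighbours_def by blast
  then have "card ((S - \<Union>M) - {u}) \<le> card (non_neighbours E S u)"
    by (rule card_mono[rotated]) (simp add: non_neighbours_def assms(1))
  moreover have "Suc (card ((S - \<Union>M) - {u})) = card (S - \<Union>M)"
    using assms(1) u by (intro card_Suc_Diff1) auto
  moreover have "real (card (non_neighbours E S u)) \<le> a" using assms(2) u by blast
  ultimately show ?thesis by linarith
qed

lemma card_Union_bipartite_matching:
  assumes "finite M" "matching M" "Y \<inter> U = {}" "M \<subseteq> {{y, u} | y u. y \<in> Y \<and> u \<in> U}"
  shows "card (\<Union>M \<inter> U) = card M" "card (\<Union>M \<inter> Y) = card M" "card (\<Union>M) = 2 * card M"
proof -
  have edge: "finite e \<and> card (e \<inter> U) = 1 \<and> card (e \<inter> Y) = 1 \<and> card e = 2" if "e \<in> M" for e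
  proof -
    obtain y u where "e = {y, u}" "y \<in> Y" "u \<in> U" using assms(4) \<open>e \<in> M\<close> by blast
    moreover have "y \<notin> U" "u \<notin> Y" "y \<noteq> u" using assms(3) calculation(2,3) by blast+
    ultimately have "e \<inter> U = {u}" "e \<inter> Y = {y}" "card e = 2" by auto
    then show ?thesis by (auto intro: card_ge_0_finite)
  qed
  then have "\<forall>e\<in>M. finite e" "\<forall>e\<in>M. card (e \<inter> U) = 1" "\<forall>e\<in>M. card (e \<inter> Y) = 1"
    "\<forall>e\<in>M. card e = 2"
    by blast+
  then show "card (\<Union>M \<inter> U) = card M" "card (\<Union>M \<inter> Y) = card M" "card (\<Union>M) = 2 * card M"
    using card_Union_matching_inter[OF assms(1,2)] card_Union_matching[OF assms(1,2)]
    by (metis mult_1)+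
qed

lemma large_bipartite_matching:
  assumes "finite U" "finite Y" "Y \<inter> U = {}"
    and "\<forall>y\<in>Y. real (card (non_neighbours E U y)) \<le> b"
  obtains M where "M \<subseteq> E \<inter> {{y, u} | y u. y \<in> Y \<and> u \<in> U}" "matching M" "finite M"
    "real (card M) \<ge> min (real (card Y)) (real (card U) - b)"
proof -
  let ?F = "E \<inter> {{y, u} | y u. y \<in> Y \<and> u \<in> U}"
  have "?F \<subseteq> (\<lambda>(y, u). {y, u}) ` (Y \<times> U)" by auto
  then have fin: "finite ?F" by (rule finite_subset) (simp add: assms(1,2))
  obtain M where M: "maximum_matching ?F M" using maximum_matching_exists[OF fin] by blast
  then have "M \<subseteq> ?F" "matching M" unfolding maximum_matching_def by auto
  moreover have "finite M" using \<open>M \<subseteq> ?F\<close> fin by (rule finite_subset)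
  moreover have "real (card M) \<ge> min (real (card Y)) (real (card U) - b)"
  proof (cases "Y \<subseteq> \<Union>M")
    case True
    then have "card Y = card M"
      using card_Union_bipartite_matching(2)[OF \<open>finite M\<close> \<open>matching M\<close> assms(3)] \<open>M \<subseteq> ?F\<close>
      by (simp add: Int_absorb2 inf_commute)
    then show ?thesis by simp
  next
    case False
    then obtain y where y: "y \<in> Y" "y \<notin> \<Union>M" by blast
    have "U - \<Union>M \<subseteq> non_neighbours E U y"
    proof
      fix v assume v: "v \<in> U - \<Union>M"
      have "{y, v} \<notin> E"
      proof
        assume "{y, v} \<in> E"
        then have "{y, v} \<in> ?F" using y v by blast
        then show False using maximum_matching_no_free_edge[OF fin M, of "{y, v}"] y v by blast
      qed
      moreover have "v \<noteq> y" using v y assms(3) by blast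
      ultimately show "v \<in> non_neighbours E U y" using v unfolding non_neighbours_def by blast
    qed
    then have "card (U - \<Union>M) \<le> card (non_neighbours E U y)"
      by (rule card_mono[rotated]) (simp add: non_neighbours_def assms(1))
    moreover have "real (card (U - \<Union>M)) = real (card U) - real (card M)"
      using card_Union_bipartite_matching(1)[OF \<open>finite M\<close> \<open>matching M\<close> assms(3)] \<open>M \<subseteq> ?F\<close>
        real_card_Diff[OF assms(1)] by (simp add: inf_commute)
    ultimately show ?thesis using assms(4) y(1) by fastforce
  qed
  ultimately show ?thesis using that by blast
qed

lemma connected_to_dense_set:
  assumes "finite U" "\<forall>u\<in>U. real (card (non_neighbours E U u)) \<le> a" "real (card U) > 2 * a + 2"
    and "r \<in> U" "real (card (non_neighbours E U x)) \<le> b" "real (card U) > b + 1"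
  shows "(r, x) \<in> (adj E)\<^sup>*"
proof -
  have "real (card (neighbours E U x)) > 0" using card_neighbours_ge[OF assms(1,5)] assms(6) by linarith
  then obtain v where v: "v \<in> neighbours E U x" by (metis card.empty ex_in_conv of_nat_0 less_irrefl)
  then have "v \<in> U" unfolding neighbours_def by blast
  then have "(r, v) \<in> (adj E)\<^sup>*" using connected_if_dense[OF assms(1-4)] by blast
  moreover have "(v, x) \<in> adj E" using neighbours_adj[OF v] symD[OF sym_adj] by blast
  ultimately show ?thesis by simp
qed

lemma large_matching_in_dense_set:
  assumes "finite U" "finite Y" "Y \<inter> U = {}" "0 \<le> a"
    and "\<forall>u\<in>U. real (card (non_neighbours E U u)) \<le> a"
    and "\<forall>y\<in>Y. real (card (non_neighbours E U y)) \<le> b"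
  obtains N where "N \<subseteq> E" "matching N" "\<Union>N \<subseteq> U \<union> Y"
    "real (card (\<Union>N)) \<ge> real (card U) + min (real (card Y)) (real (card U) - b) - a - 1"
proof -
  obtain M1 where M1: "M1 \<subseteq> E \<inter> {{y, u} | y u. y \<in> Y \<and> u \<in> U}" "matching M1" "finite M1"
    "real (card M1) \<ge> min (real (card Y)) (real (card U) - b)"
    using large_bipartite_matching[OF assms(1-3,6)] by blast
  have cM1: "card (\<Union>M1 \<inter> U) = card M1" "card (\<Union>M1) = 2 * card M1"
    using card_Union_bipartite_matching[OF M1(3,2) assms(3)] M1(1) by auto
  have UM1: "\<Union>M1 \<subseteq> U \<union> Y" using M1(1) by blast
  define U1 where "U1 = U - \<Union>M1"
  have U1: "finite U1" "U1 \<subseteq> U" unfolding U1_def using assms(1) by auto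
  have cU1: "real (card U1) = real (card U) - real (card M1)"
    unfolding U1_def using real_card_Diff[OF assms(1)] cM1(1) by (simp add: inf_commute)
  have dense_U1: "\<forall>u\<in>U1. real (card (non_neighbours E U1 u)) \<le> a"
    using assms(5) card_non_neighbours_mono[OF assms(1) U1(2) order_refl] U1(2)
    by (meson of_nat_le_iff order_trans subsetD)
  have "finite {e \<in> E. e \<subseteq> U1}" by (rule finite_subset[of _ "Pow U1"]) (auto simp: U1(1))
  then obtain M2 where M2: "maximum_matching {e \<in> E. e \<subseteq> U1} M2"
    using maximum_matching_exists by blast
  have "M2 \<subseteq> E" "matching M2" "\<Union>M2 \<subseteq> U1" using M2 unfolding maximum_matching_def by auto
  have cM2: "real (card (\<Union>M2)) \<ge> real (card U1) - a - 1"
  proof -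
    have "real (card (U1 - \<Union>M2)) \<le> a + 1"
      by (rule card_uncovered_le_if_maximum_matching[OF U1(1) dense_U1 assms(4) M2])
    moreover have "real (card (U1 - \<Union>M2)) = real (card U1) - real (card (\<Union>M2))"
      using real_card_Diff[OF U1(1)] \<open>\<Union>M2 \<subseteq> U1\<close> by (simp add: Int_absorb1)
    ultimately show ?thesis by linarith
  qed
  have disj: "\<Union>M1 \<inter> \<Union>M2 = {}" using \<open>\<Union>M2 \<subseteq> U1\<close> unfolding U1_def by blast
  have "card (\<Union>(M1 \<union> M2)) = card (\<Union>M1) + card (\<Union>M2)"
    using card_Un_disjoint[OF _ _ disj] UM1 \<open>\<Union>M2 \<subseteq> U1\<close> U1 assms(1,2)
    by (simp add: finite_subset)
  then have "real (card (\<Union>(M1 \<union> M2))) \<ge> real (card U) + min (real (card Y)) (real (card U) - b) - a - 1"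
    using cM1(2) cU1 cM2 M1(4) by linarith
  moreover have "M1 \<union> M2 \<subseteq> E" using M1(1) \<open>M2 \<subseteq> E\<close> by blast
  moreover have "matching (M1 \<union> M2)" using matching_Un[OF M1(2) \<open>matching M2\<close> disj] .
  moreover have "\<Union>(M1 \<union> M2) \<subseteq> U \<union> Y" using UM1 \<open>\<Union>M2 \<subseteq> U1\<close> U1(2) by blast
  ultimately show ?thesis using that by blast
qed

lemma connected_matching_in_dense_set:
  assumes "finite U" "finite Y" "Y \<inter> U = {}" "U \<subseteq> V" "0 \<le> a"
    and "\<forall>u\<in>U. real (card (non_neighbours E U u)) \<le> a"
    and "\<forall>y\<in>Y. real (card (non_neighbours E U y)) \<le> b"
    and "real (card U) > 2 * a + 2" "real (card U) > b + 1"
  shows "\<exists>N. connected_matching V E N \<and>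
    real (card (\<Union>N)) \<ge> real (card U) + min (real (card Y)) (real (card U) - b) - a - 1"
proof -
  obtain N where N: "N \<subseteq> E" "matching N" "\<Union>N \<subseteq> U \<union> Y"
    "real (card (\<Union>N)) \<ge> real (card U) + min (real (card Y)) (real (card U) - b) - a - 1"
    using large_matching_in_dense_set[OF assms(1-3,5-7)] by blast
  have "U \<noteq> {}" using assms(5,8) by auto
  then obtain r where "r \<in> U" by blast
  have "(r, x) \<in> (adj E)\<^sup>*" if "x \<in> U \<union> Y" for x
  proof (cases "x \<in> U")
    case True
    then show ?thesis using connected_to_dense_set[OF assms(1,6,8) \<open>r \<in> U\<close>] assms(5,6,8) by auto
  next
    case False
    then show ?thesis using connected_to_dense_set[OF assms(1,6,8) \<open>r \<in> U\<close>] assms(7,9) that by auto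
  qed
  then have "connected_matching V E N"
    unfolding connected_matching_def using N(1-3) \<open>r \<in> U\<close> assms(4) by blast
  then show ?thesis using N(4) by blast
qed

lemma matched_endpoint_with_one_free_neighbour:
  assumes "finite W" "edges_on V E" "maximum_matching {e \<in> E. e \<subseteq> W} M" "e \<in> M"
  shows "\<exists>z\<in>e. \<exists>u. \<forall>v\<in>W - \<Union>M. {z, v} \<in> E \<longrightarrow> v = u"
proof (rule ccontr)
  let ?F = "{e \<in> E. e \<subseteq> W}"
  assume "\<not> ?thesis"
  then have many: "\<forall>z\<in>e. \<forall>u. \<exists>v\<in>W - \<Union>M. {z, v} \<in> E \<and> v \<noteq> u" by blast
  have "e \<in> ?F" using assms(3,4) unfolding maximum_matching_def by blast
  then obtain x y where e: "e = {x, y}" "x \<noteq> y" "e \<subseteq> W" using assms(2) by (blast elim: edges_onE)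
  obtain u where u: "u \<in> W - \<Union>M" "{x, u} \<in> E" using many e(1) by blast
  obtain v where v: "v \<in> W - \<Union>M" "{y, v} \<in> E" "v \<noteq> u" using many e(1) by blast
  have "finite ?F" by (rule finite_subset[of _ "Pow W"]) (auto simp: assms(1))
  moreover have "{x, u} \<in> ?F" "{y, v} \<in> ?F" using u v e(1,3) by auto
  ultimately show False
    using maximum_matching_no_augmenting_path[OF _ assms(3), of x y u v] assms(4) e u v by blast
qed

lemma matched_vertices_with_one_free_neighbour:
  assumes "finite W" "edges_on V E" "maximum_matching {e \<in> E. e \<subseteq> W} M"
  obtains Y where "Y \<subseteq> \<Union>M" "card Y = card M" "\<forall>y\<in>Y. \<exists>u. \<forall>v\<in>W - \<Union>M. {y, v} \<in> E \<longrightarrow> v = u"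
proof -
  have "\<forall>e\<in>M. \<exists>z. z \<in> e \<and> (\<exists>u. \<forall>v\<in>W - \<Union>M. {z, v} \<in> E \<longrightarrow> v = u)"
    using matched_endpoint_with_one_free_neighbour[OF assms] by blast
  then obtain z where z: "\<forall>e\<in>M. z e \<in> e \<and> (\<exists>u. \<forall>v\<in>W - \<Union>M. {z e, v} \<in> E \<longrightarrow> v = u)"
    by (rule bchoice[THEN exE])
  then have z_in: "\<And>e. e \<in> M \<Longrightarrow> z e \<in> e"
    and z_free: "\<And>e. e \<in> M \<Longrightarrow> \<exists>u. \<forall>v\<in>W - \<Union>M. {z e, v} \<in> E \<longrightarrow> v = u"
    by blast+
  have "matching M" using assms(3) unfolding maximum_matching_def by blast
  have "inj_on z M"
  proof (rule inj_onI)
    fix e e' assume "e \<in> M" "e' \<in> M" "z e = z e'"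
    then have "z e \<in> e \<inter> e'" using z_in[of e] z_in[of e'] by simp
    then show "e = e'" using matchingD[OF \<open>matching M\<close> \<open>e \<in> M\<close> \<open>e' \<in> M\<close>] by blast
  qed
  then have "card (z ` M) = card M" by (rule card_image)
  moreover have "z ` M \<subseteq> \<Union>M" using z_in by blast
  moreover have "\<forall>y\<in>z ` M. \<exists>u. \<forall>v\<in>W - \<Union>M. {y, v} \<in> E \<longrightarrow> v = u" using z_free by blast
  ultimately show ?thesis using that by blast
qed

lemma maximum_matching_complement_dense:
  assumes "finite W" "edges_on V E1" "maximum_matching {e \<in> E1. e \<subseteq> W} M"
    and "\<forall>x\<in>W. real (card (non_neighbours (E1 \<union> E2) W x)) \<le> a"
  obtains Y where "Y \<subseteq> W" "card Y = card M" "Y \<inter> (W - \<Union>M) = {}"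
    "\<forall>u\<in>W - \<Union>M. real (card (non_neighbours E2 (W - \<Union>M) u)) \<le> a"
    "\<forall>y\<in>Y. real (card (non_neighbours E2 (W - \<Union>M) y)) \<le> a + 1"
proof -
  let ?U = "W - \<Union>M"
  obtain Y where Y: "Y \<subseteq> \<Union>M" "card Y = card M" "\<forall>y\<in>Y. \<exists>u. \<forall>v\<in>?U. {y, v} \<in> E1 \<longrightarrow> v = u"
    using matched_vertices_with_one_free_neighbour[OF assms(1-3)] by blast
  have "\<Union>M \<subseteq> W" using assms(3) unfolding maximum_matching_def by blast
  have "real (card (non_neighbours E2 ?U u)) \<le> a" if "u \<in> ?U" for u
  proof -
    have "non_neighbours E2 ?U u \<subseteq> non_neighbours (E1 \<union> E2) W u"
      using uncovered_independent[OF assms(1,3) that] unfolding non_neighbours_def by blast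
    then have "card (non_neighbours E2 ?U u) \<le> card (non_neighbours (E1 \<union> E2) W u)"
      by (rule card_mono[rotated]) (simp add: non_neighbours_def assms(1))
    then show ?thesis using assms(4) that by fastforce
  qed
  moreover have "real (card (non_neighbours E2 ?U y)) \<le> a + 1" if "y \<in> Y" for y
  proof -
    obtain u where u: "\<forall>v\<in>?U. {y, v} \<in> E1 \<longrightarrow> v = u" using Y(3) \<open>y \<in> Y\<close> by blast
    have "non_neighbours E2 ?U y \<subseteq> insert u (non_neighbours (E1 \<union> E2) W y)"
      using u unfolding non_neighbours_def by blast
    then have "card (non_neighbours E2 ?U y) \<le> card (insert u (non_neighbours (E1 \<union> E2) W y))"
      by (rule card_mono[rotated]) (simp add: non_neighbours_def assms(1))
    also have "\<dots> \<le> Suc (card (non_neighbours (E1 \<union> E2) W y))" by (simp add: card_insert_if non_neighbours_def assms(1))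
    finally show ?thesis using assms(4) Y(1) \<open>\<Union>M \<subseteq> W\<close> that by fastforce
  qed
  moreover have "Y \<subseteq> W" "Y \<inter> ?U = {}" using Y(1) \<open>\<Union>M \<subseteq> W\<close> by blast+
  ultimately show ?thesis using that Y(2) by blast
qed

lemma two_thirds_bound:
  fixes w m a :: real
  assumes "0 \<le> a" "2 * m < 2/3 * w - 2*a - 2"
  shows "2/3 * w - 2*a - 2 \<le> (w - 2*m) + min m (w - 2*m - (a + 1)) - a - 1"
  using assms by (cases "m \<le> w - 2*m - (a + 1)") (simp_all add: min_def)

lemma connected_matching_in_connected_set:
  assumes "finite V" "edges_on V E1" "W \<subseteq> V" "w \<in> W" "\<forall>x\<in>W. (w, x) \<in> (adj E1)\<^sup>*"
    and "\<forall>x\<in>W. real (card (non_neighbours (E1 \<union> E2) W x)) \<le> a"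
  shows "(\<exists>M. connected_matching V E1 M \<and> real (card (\<Union>M)) \<ge> 2/3 * real (card W) - 2*a - 2) \<or>
         (\<exists>M. connected_matching V E2 M \<and> real (card (\<Union>M)) \<ge> 2/3 * real (card W) - 2*a - 2)"
proof -
  have "finite W" using assms(1,3) by (rule rev_finite_subset)
  have "a \<ge> 0" using assms(4,6) by (meson of_nat_0_le_iff order_trans)
  have "finite {e \<in> E1. e \<subseteq> W}" by (rule finite_subset[of _ "Pow W"]) (auto simp: \<open>finite W\<close>)
  then obtain M where M: "maximum_matching {e \<in> E1. e \<subseteq> W} M"
    using maximum_matching_exists by blast
  then have "M \<subseteq> E1" "matching M" "\<Union>M \<subseteq> W" "finite M"
    unfolding maximum_matching_def using \<open>finite {e \<in> E1. e \<subseteq> W}\<close> by (auto intro: finite_subset)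
  then have "card (\<Union>M) = 2 * card M"
    using card_Union_matching card_edge[OF assms(2)] by blast
  then have card_M: "real (card (\<Union>M)) = 2 * real (card M)" by simp
  show ?thesis
  proof (cases "real (card (\<Union>M)) \<ge> 2/3 * real (card W) - 2*a - 2")
    case True
    have "connected_matching V E1 M"
      unfolding connected_matching_def using \<open>M \<subseteq> E1\<close> \<open>matching M\<close> \<open>\<Union>M \<subseteq> W\<close> assms(3-5) by blast
    then show ?thesis using True by blast
  next
    case False
    let ?U = "W - \<Union>M"
    obtain Y where Y: "Y \<subseteq> W" "card Y = card M" "Y \<inter> ?U = {}"
      "\<forall>u\<in>?U. real (card (non_neighbours E2 ?U u)) \<le> a"
      "\<forall>y\<in>Y. real (card (non_neighbours E2 ?U y)) \<le> a + 1"
      using maximum_matching_complement_dense[OF \<open>finite W\<close> assms(2) M assms(6)] by blast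
    have card_U: "real (card ?U) = real (card W) - 2 * real (card M)"
      using real_card_Diff[OF \<open>finite W\<close>] \<open>\<Union>M \<subseteq> W\<close> card_M by (simp add: Int_absorb1)
    have "\<exists>N. connected_matching V E2 N \<and>
        real (card (\<Union>N)) \<ge> real (card ?U) + min (real (card Y)) (real (card ?U) - (a + 1)) - a - 1"
      using \<open>finite W\<close> \<open>Y \<subseteq> W\<close> assms(3) \<open>a \<ge> 0\<close> False card_M card_U
      by (intro connected_matching_in_dense_set Y(3-5)) (auto intro: finite_subset)
    moreover have "real (card ?U) + min (real (card Y)) (real (card ?U) - (a + 1)) - a - 1
        \<ge> 2/3 * real (card W) - 2*a - 2"
      using two_thirds_bound[OF \<open>a \<ge> 0\<close>, of "real (card M)"] False card_M card_U Y(2) by simp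
    ultimately show ?thesis by (meson order_trans)
  qed
qed

lemma two_coloured_connected_matching:
  assumes "finite V" "edges_on V R" "edges_on V B" "V \<noteq> {}"
    and "\<forall>x\<in>V. real (card (non_neighbours (R \<union> B) V x)) \<le> a"
  shows "(\<exists>M. connected_matching V R M \<and> real (card (\<Union>M)) \<ge> 2/3 * real (card V) - 4*a - 2) \<or>
         (\<exists>M. connected_matching V B M \<and> real (card (\<Union>M)) \<ge> 2/3 * real (card V) - 4*a - 2)"
proof (cases "\<exists>w\<in>V. real (card (V - component R V w)) \<le> 2 * a")
  case True
  then obtain w where "w \<in> V" and small: "real (card (V - component R V w)) \<le> 2 * a" by blast
  let ?W = "component R V w"
  have W: "?W \<subseteq> V" "w \<in> ?W" "\<forall>x\<in>?W. (w, x) \<in> (adj R)\<^sup>*"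
    using self_in_component[OF \<open>w \<in> V\<close>] unfolding component_def by auto
  have "\<forall>x\<in>?W. real (card (non_neighbours (R \<union> B) ?W x)) \<le> a"
    using assms(5) card_non_neighbours_mono[OF assms(1) W(1) order_refl] W(1)
    by (meson of_nat_le_iff order_trans subsetD)
  note matching = connected_matching_in_connected_set[OF assms(1,2) W this]
  have "real (card V) = real (card ?W) + real (card (V - ?W))"
    using real_card_Diff[OF assms(1)] W(1) by (simp add: Int_absorb1)
  then have "2/3 * real (card ?W) - 2*a - 2 \<ge> 2/3 * real (card V) - 4*a - 2"
    using small by linarith
  then show ?thesis using matching by (meson order_trans)
next
  case False
  obtain w where "w \<in> V" using assms(4) by blast
  have "a \<ge> 0" using assms(5) \<open>w \<in> V\<close> by (meson of_nat_0_le_iff order_trans)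
  have "\<forall>x\<in>V. (w, x) \<in> (adj B)\<^sup>*"
    using connected_if_components_small[OF assms(1,5)] False \<open>w \<in> V\<close> by (simp add: not_le)
  moreover have "\<forall>x\<in>V. real (card (non_neighbours (B \<union> R) V x)) \<le> a"
    using assms(5) by (simp add: Un_commute)
  ultimately have "(\<exists>M. connected_matching V B M \<and> real (card (\<Union>M)) \<ge> 2/3 * real (card V) - 2*a - 2) \<or>
      (\<exists>M. connected_matching V R M \<and> real (card (\<Union>M)) \<ge> 2/3 * real (card V) - 2*a - 2)"
    using connected_matching_in_connected_set[OF assms(1,3) order_refl \<open>w \<in> V\<close>] by blast
  moreover have "2/3 * real (card V) - 2*a - 2 \<ge> 2/3 * real (card V) - 4*a - 2" using \<open>a \<ge> 0\<close> by simp
  ultimately show ?thesis by (meson order_trans)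
qed

section \<open>The main estimate\<close>

lemma le_root8_div_128:
  fixes \<epsilon> :: real
  assumes "0 < \<epsilon>" "\<epsilon> < 1/256"
  shows "\<epsilon> \<le> \<epsilon> powr (1/8) / 128"
proof -
  define t where "t = \<epsilon> powr (1/8)"
  have "t > 0" unfolding t_def using assms(1) by simp
  have "t ^ 8 = \<epsilon>"
    unfolding t_def using assms(1) by (simp add: powr_realpow[symmetric] powr_powr)
  have "t < 1/2"
  proof (rule ccontr)
    assume "\<not> t < 1/2"
    then have "(1/2) ^ 8 \<le> t ^ 8" by (intro power_mono) auto
    then show False using \<open>t ^ 8 = \<epsilon>\<close> assms(2) by (simp add: power_one_over)
  qed
  then have "t ^ 7 \<le> (1/2) ^ 7" using \<open>t > 0\<close> by (intro power_mono) auto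
  then have "t * t ^ 7 \<le> t * (1/2) ^ 7" using \<open>t > 0\<close> by (intro mult_left_mono) auto
  then show ?thesis using \<open>t ^ 8 = \<epsilon>\<close> unfolding t_def[symmetric]
    by (simp add: power_one_over power_Suc[symmetric] del: power_Suc)
qed

lemma parameter_bound:
  fixes \<epsilon> t k K :: real
  assumes "0 < \<epsilon>" "\<epsilon> \<le> 1" "\<epsilon> \<le> t / 128" "1 \<le> t * k" "(1 - \<epsilon>) * k < K" "0 \<le> k"
  shows "(2/3 - 7 * t) * k \<le> 2/3 * K - 4 * (27/8 * \<epsilon> ^ 4 * k) - 2"
proof -
  have "\<epsilon> ^ 4 \<le> \<epsilon>" using power_decreasing[of 1 4 \<epsilon>] assms(1,2) by simp
  then have "\<epsilon> ^ 4 * k \<le> \<epsilon> * k" "\<epsilon> * k \<le> t / 128 * k"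
    using mult_right_mono assms(3,6) by blast+
  then show ?thesis using assms(4,5) by (simp add: algebra_simps)
qed

theorem corollary7p16:
  fixes \<epsilon> :: real
  assumes "0 < \<epsilon>" and "\<epsilon> < 1 / 10 ^ 12"
  shows "\<exists>k0::nat. \<forall>k::nat \<ge> k0. \<forall>(K::nat) (V::nat set) (R::nat set set) (B::nat set set).
    (real K > (1 - \<epsilon>) * real k \<and> card V = K \<and> two_multicoloured_graph V R B \<and>
     almost_complete V (R \<union> B) (27 / 8 * \<epsilon> ^ 4 * real k)) \<longrightarrow>
    (\<exists>M. connected_matching V R M \<and> real (card (\<Union>M)) \<ge> (2 / 3 - 7 * \<epsilon> powr (1 / 8)) * real k) \<or>
    (\<exists>M. connected_matching V B M \<and> real (card (\<Union>M)) \<ge> (2 / 3 - 7 * \<epsilon> powr (1 / 8)) * real k)"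
proof -
  define t where "t = \<epsilon> powr (1/8)"
  have "t > 0" "\<epsilon> \<le> t / 128" using le_root8_div_128[of \<epsilon>] assms unfolding t_def by auto
  show ?thesis
  proof (intro exI[of _ "nat \<lceil>1 / t\<rceil>"] allI impI, elim conjE)
    fix k K V R B
    assume k: "nat \<lceil>1 / t\<rceil> \<le> k" and K: "real K > (1 - \<epsilon>) * real k" "card V = K"
      and G: "two_multicoloured_graph V R B" "almost_complete V (R \<union> B) (27 / 8 * \<epsilon> ^ 4 * real k)"
    have G': "finite V" "edges_on V R" "edges_on V B"
      using G(1) unfolding two_multicoloured_graph_def by auto
    have "\<forall>x\<in>V. real (card (non_neighbours (R \<union> B) V x)) \<le> 27 / 8 * \<epsilon> ^ 4 * real k"
      using card_non_neighbours_le_if_almost_complete[OF G'(1) edges_on_Un[OF G'(2,3)] G(2)] by blast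
    note matching = two_coloured_connected_matching[OF G' _ this]
    have "1 \<le> t * real k"
      using k \<open>t > 0\<close> real_nat_ceiling_ge[of "1 / t"] by (simp add: field_simps)
    have "\<epsilon> \<le> 1" using assms by simp
    then have "(1 - \<epsilon>) * real k \<ge> 0" by simp
    then have "V \<noteq> {}" using K by auto
    moreover have "(2/3 - 7 * t) * real k \<le> 2/3 * real (card V) - 4 * (27/8 * \<epsilon> ^ 4 * real k) - 2"
      using parameter_bound[OF assms(1) \<open>\<epsilon> \<le> 1\<close> \<open>\<epsilon> \<le> t / 128\<close> \<open>1 \<le> t * real k\<close>] K by simp
    ultimately show "(\<exists>M. connected_matching V R M \<and> real (card (\<Union>M)) \<ge> (2 / 3 - 7 * \<epsilon> powr (1 / 8)) * real k) \<or>
      (\<exists>M. connected_matching V B M \<and> real (card (\<Union>M)) \<ge> (2 / 3 - 7 * \<epsilon> powr (1 / 8)) * real k)"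
      using matching unfolding t_def by (meson order_trans)
  qed
qed

end
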